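(* Let $f_1,\dots,f_m:\mathbb R^n\to\mathbb R$ be continuously differentiable with $\nabla f_j$ being $L_j$-Lipschitz, and set $L=\max_j L_j$. Let $C_1>0$, $\tau>0$ and $x,y\in\mathbb R^n$ with $\|x\|+\|y\|\le C_1$. Then $$\Big\|\mathrm{proj}_{C(y)}\Big(\frac{y-x}{\tau}\Big)-\mathrm{proj}_{C(x)}\Big(\frac{y-x}{\tau}\Big)\Big\|\le\sqrt{C_2L}\,\|x-y\|^{1/2}+\sqrt{\frac{3L}{\tau}}\,\|x-y\|,$$ where $C_2:=LC_1+2\max_{1\le j\le m}\|\nabla f_j(0)\|$.
   Context: $C(x)=\mathrm{conv}\{\nabla f_1(x),\dots,\nabla f_m(x)\}$, and $\mathrm{proj}_C(v)$ is the Euclidean projection of $v$ onto the closed convex set $C$. (In the paper this is applied to the iterates $x_k,y_k$ of a multiobjective accelerated proximal gradient method, which are bounded by a constant $C_1$.) *)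

theory Defs
  imports "HOL-Analysis.Analysis"
begin

end

theory Submission
  imports Defs
begin

text \<open>Moving each gradient by at most \<open>\<delta> = L \<parallel>x - y\<parallel>\<close> moves every point of the convex hull
  \<open>C(x)\<close> by at most \<open>\<delta>\<close>, so \<open>C(x)\<close> and \<open>C(y)\<close> are \<open>\<delta>\<close>-close in both directions. Adding the
  variational inequalities of the two projections \<open>p, q\<close> of \<open>v\<close>, each tested against a point
  \<open>\<delta>\<close>-close to the other projection, gives
  \<open>\<parallel>p - q\<parallel>^2 \<le> \<delta> (\<parallel>v - p\<parallel> + \<parallel>v - q\<parallel>)\<close>. Finally \<open>\<parallel>v\<parallel> = \<parallel>x - y\<parallel>/\<tau>\<close> and
  \<open>\<parallel>p\<parallel>, \<parallel>q\<parallel>\<close> are bounded through the linear growth of Lipschitz gradients, and the square root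
  of the resulting bound splits into the two terms of the claim (with \<open>2L/\<tau>\<close> in place of
  \<open>3L/\<tau>\<close>).\<close>

lemma closest_point_inner_le:
  fixes S :: "'a::euclidean_space set"
  assumes "convex S" "closed S" "s \<in> S"
  shows "(v - closest_point S v) \<bullet> (u - closest_point S v) \<le> norm (v - closest_point S v) * norm (u - s)"
proof -
  let ?p = "closest_point S v"
  have "(v - ?p) \<bullet> (u - ?p) = (v - ?p) \<bullet> (s - ?p) + (v - ?p) \<bullet> (u - s)"
    by (simp add: inner_diff_right)
  also have "\<dots> \<le> (v - ?p) \<bullet> (u - s)"
    using closest_point_dot[OF assms] by simp
  also have "\<dots> \<le> norm (v - ?p) * norm (u - s)"
    by (rule norm_cauchy_schwarz)
  finally show ?thesis .
qed

lemma closest_point_diff_sq_le: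
  fixes S T :: "'a::euclidean_space set"
  assumes S: "convex S" "closed S" "S \<noteq> {}" and T: "convex T" "closed T" "T \<noteq> {}"
    and ST: "\<And>t. t \<in> T \<Longrightarrow> \<exists>s\<in>S. norm (t - s) \<le> \<delta>"
    and TS: "\<And>s. s \<in> S \<Longrightarrow> \<exists>t\<in>T. norm (s - t) \<le> \<delta>"
  shows "norm (closest_point S v - closest_point T v)^2
    \<le> \<delta> * (norm (v - closest_point S v) + norm (v - closest_point T v))"
proof -
  define p where "p = closest_point S v"
  define q where "q = closest_point T v"
  obtain s where s: "s \<in> S" "norm (q - s) \<le> \<delta>"
    using ST closest_point_in_set[OF T(2,3)] unfolding q_def by blast
  obtain t where t: "t \<in> T" "norm (p - t) \<le> \<delta>"
    using TS closest_point_in_set[OF S(2,3)] unfolding p_def by blast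
  have "(v - p) \<bullet> (q - p) \<le> norm (v - p) * \<delta>"
    using closest_point_inner_le[OF S(1,2) s(1), of v q] mult_left_mono[OF s(2), of "norm (v - p)"]
    unfolding p_def by simp
  moreover have "(v - q) \<bullet> (p - q) \<le> norm (v - q) * \<delta>"
    using closest_point_inner_le[OF T(1,2) t(1), of v p] mult_left_mono[OF t(2), of "norm (v - q)"]
    unfolding q_def by simp
  moreover have "norm (p - q)^2 = (v - p) \<bullet> (q - p) + (v - q) \<bullet> (p - q)"
    by (simp add: power2_norm_eq_inner inner_diff_left inner_diff_right inner_commute algebra_simps)
  ultimately show ?thesis
    unfolding p_def q_def by (simp add: algebra_simps)
qed

lemma convex_hull_image_close:
  fixes g h :: "'i \<Rightarrow> 'a::euclidean_space"
  assumes "\<And>j. j \<in> I \<Longrightarrow> norm (g j - h j) \<le> \<delta>" "b \<in> convex hull (g ` I)"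
  shows "\<exists>a\<in>convex hull (h ` I). norm (b - a) \<le> \<delta>"
proof -
  define S where "S = (\<Union>a\<in>convex hull (h ` I). \<Union>e\<in>cball 0 \<delta>. {a + e})"
  have "g j \<in> S" if "j \<in> I" for j
  proof -
    have "h j \<in> convex hull (h ` I)"
      using that by (simp add: hull_inc)
    moreover have "g j - h j \<in> cball 0 \<delta>"
      using assms(1)[OF that] by simp
    ultimately show ?thesis
      unfolding S_def by force
  qed
  moreover have "convex S"
    unfolding S_def by (intro convex_sums convex_convex_hull convex_cball)
  ultimately have "convex hull (g ` I) \<subseteq> S"
    by (intro hull_minimal) auto
  then show ?thesis
    using assms(2) unfolding S_def by (force simp: dist_norm)
qed

lemma closest_point_convex_hull_image_perturb:
  fixes g h :: "'i \<Rightarrow> 'a::euclidean_space"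
  assumes I: "finite I" "I \<noteq> {}"
    and gh: "\<And>j. j \<in> I \<Longrightarrow> norm (g j - h j) \<le> \<delta>"
    and g: "\<And>j. j \<in> I \<Longrightarrow> norm (g j) \<le> R" and h: "\<And>j. j \<in> I \<Longrightarrow> norm (h j) \<le> R'"
  shows "norm (closest_point (convex hull (g ` I)) v - closest_point (convex hull (h ` I)) v)^2
    \<le> \<delta> * (2 * norm v + R + R')"
proof -
  define S where "S = convex hull (g ` I)"
  define T where "T = convex hull (h ` I)"
  have hulls: "convex S" "closed S" "S \<noteq> {}" "convex T" "closed T" "T \<noteq> {}"
    unfolding S_def T_def using I
    by (auto intro: compact_imp_closed finite_imp_compact_convex_hull)
  obtain j where "j \<in> I"
    using I(2) by blast
  then have "0 \<le> \<delta>"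
    using gh norm_ge_zero order_trans by metis
  have "S \<subseteq> cball 0 R"
    unfolding S_def using g by (intro hull_minimal convex_cball) auto
  moreover have "T \<subseteq> cball 0 R'"
    unfolding T_def using h by (intro hull_minimal convex_cball) auto
  ultimately have "norm (v - closest_point S v) + norm (v - closest_point T v) \<le> 2 * norm v + R + R'"
    using closest_point_in_set[OF hulls(2,3), of v] closest_point_in_set[OF hulls(5,6), of v]
      norm_triangle_ineq4[of v "closest_point S v"] norm_triangle_ineq4[of v "closest_point T v"]
    by fastforce
  moreover have "\<And>t. t \<in> T \<Longrightarrow> \<exists>s\<in>S. norm (t - s) \<le> \<delta>"
    unfolding S_def T_def using gh by (intro convex_hull_image_close) (auto simp: norm_minus_commute)
  moreover have "\<And>s. s \<in> S \<Longrightarrow> \<exists>t\<in>T. norm (s - t) \<le> \<delta>"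
    unfolding S_def T_def using gh by (intro convex_hull_image_close)
  ultimately show ?thesis
    using closest_point_diff_sq_le[OF hulls] mult_left_mono[OF _ \<open>0 \<le> \<delta>\<close>]
    unfolding S_def T_def by (meson order_trans)
qed

lemma le_sqrt_add_sqrt_if_square_le:
  fixes z a b d :: real
  assumes "0 \<le> a" "0 \<le> b" "0 \<le> d" "z^2 \<le> a * d + b * d^2"
  shows "z \<le> sqrt a * sqrt d + sqrt b * d"
proof -
  have "z \<le> sqrt (a * d + b * d^2)"
    using assms(4) by (rule real_le_rsqrt)
  also have "\<dots> \<le> sqrt (a * d) + sqrt (b * d^2)"
    using assms by (intro sqrt_add_le_add_sqrt) auto
  also have "\<dots> = sqrt a * sqrt d + sqrt b * d"
    using assms(3) by (simp add: real_sqrt_mult)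
  finally show ?thesis .
qed

lemma lipschitz_family_Max:
  fixes F :: "'i \<Rightarrow> 'a::real_normed_vector \<Rightarrow> 'b::real_normed_vector"
  assumes "finite I" "j \<in> I"
    and lip: "\<And>i u v. i \<in> I \<Longrightarrow> norm (F i u - F i v) \<le> K i * norm (u - v)"
  shows "norm (F j u - F j v) \<le> Max (K ` I) * norm (u - v)"
    and "norm (F j z) \<le> Max ((\<lambda>i. norm (F i 0)) ` I) + Max (K ` I) * norm z"
proof -
  have K: "K j \<le> Max (K ` I)" and F0: "norm (F j 0) \<le> Max ((\<lambda>i. norm (F i 0)) ` I)"
    using assms(1,2) by simp_all
  show lipMax: "norm (F j u - F j v) \<le> Max (K ` I) * norm (u - v)" for u v
    using lip[OF assms(2), of u v] mult_right_mono[OF K norm_ge_zero] by (rule order_trans)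
  show "norm (F j z) \<le> Max ((\<lambda>i. norm (F i 0)) ` I) + Max (K ` I) * norm z"
    using lipMax[of z 0] F0 norm_triangle_sub[of "F j z" "F j 0"] by simp
qed

theorem mainTheorem4:
  fixes f :: "nat \<Rightarrow> real ^ 'n \<Rightarrow> real"
    and grad :: "nat \<Rightarrow> real ^ 'n \<Rightarrow> real ^ 'n"
    and Lj :: "nat \<Rightarrow> real"
    and m :: nat and L C1 \<tau> :: real and x y :: "real ^ 'n"
  assumes m: "m \<ge> 1"
    and deriv: "\<And>j z. j \<in> {1..m} \<Longrightarrow> (f j has_derivative (\<lambda>h. grad j z \<bullet> h)) (at z)"
    and cont: "\<And>j. j \<in> {1..m} \<Longrightarrow> continuous_on UNIV (grad j)"
    and Lj_nonneg: "\<And>j. j \<in> {1..m} \<Longrightarrow> Lj j \<ge> 0"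
    and lip: "\<And>j u v. j \<in> {1..m} \<Longrightarrow> norm (grad j u - grad j v) \<le> Lj j * norm (u - v)"
    and L_def: "L = Max (Lj ` {1..m})"
    and C1: "C1 > 0" and tau: "\<tau> > 0"
    and xy: "norm x + norm y \<le> C1"
  shows "norm (closest_point (convex hull ((\<lambda>j. grad j y) ` {1..m})) ((y - x) /\<^sub>R \<tau>)
              - closest_point (convex hull ((\<lambda>j. grad j x) ` {1..m})) ((y - x) /\<^sub>R \<tau>))
         \<le> sqrt ((L * C1 + 2 * Max ((\<lambda>j. norm (grad j 0)) ` {1..m})) * L) * sqrt (norm (x - y))
            + sqrt (3 * L / \<tau>) * norm (x - y)"
proof -
  define d where "d = norm (x - y)"
  define G where "G = Max ((\<lambda>j. norm (grad j 0)) ` {1..m})"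
  have I: "finite {1..m}" "{1..m} \<noteq> {}" "1 \<in> {1..m}"
    using m by auto
  have lipL: "norm (grad j u - grad j v) \<le> L * norm (u - v)"
    and growth: "norm (grad j z) \<le> G + L * norm z" if "j \<in> {1..m}" for j u v z
    using lipschitz_family_Max[OF I(1) that lip] unfolding L_def G_def by auto
  have "0 \<le> L"
    using Lj_nonneg[OF I(3)] I(1,3) unfolding L_def by (meson Max_ge finite_imageI imageI order_trans)
  have "0 \<le> G" "0 \<le> d"
    using growth[OF I(3), of 0] unfolding d_def by (auto intro: order_trans[OF norm_ge_zero])
  have v: "norm ((y - x) /\<^sub>R \<tau>) = d / \<tau>"
    using tau unfolding d_def by (simp add: norm_minus_commute divide_inverse mult.commute)
  have "norm (closest_point (convex hull ((\<lambda>j. grad j y) ` {1..m})) ((y - x) /\<^sub>R \<tau>)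
          - closest_point (convex hull ((\<lambda>j. grad j x) ` {1..m})) ((y - x) /\<^sub>R \<tau>))^2
        \<le> L * d * (2 * norm ((y - x) /\<^sub>R \<tau>) + (G + L * norm y) + (G + L * norm x))"
    using lipL growth unfolding d_def
    by (intro closest_point_convex_hull_image_perturb I(1,2)) (auto simp: norm_minus_commute)
  also have "\<dots> \<le> L * d * (2 * d / \<tau> + 2 * G + L * C1)"
    using mult_left_mono[OF xy \<open>0 \<le> L\<close>] \<open>0 \<le> L\<close> \<open>0 \<le> d\<close> unfolding v
    by (intro mult_left_mono) (simp_all add: algebra_simps)
  also have "\<dots> \<le> (L * C1 + 2 * G) * L * d + 3 * L / \<tau> * d^2"
    using tau \<open>0 \<le> L\<close> \<open>0 \<le> d\<close>
    by (simp add: algebra_simps power2_eq_square divide_right_mono mult_left_mono)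
  finally show ?thesis
    using C1 tau \<open>0 \<le> L\<close> \<open>0 \<le> G\<close> \<open>0 \<le> d\<close> unfolding d_def G_def
    by (intro le_sqrt_add_sqrt_if_square_le) auto
qed

end
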